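(* Let $(C,\mathfrak p,\mathfrak d)$ be a regular $q$-magma coalgebra. If $0\le i,j,k\le n-1$ and $k>i$, then $\mathfrak p_{ij}^k=\mathfrak d_{ij}^k=0$.
   Context: $K$ is an algebraically closed field of characteristic $0$ and $n\ge2$. $C$ is the coalgebra dual to $K[y]/\langle y^n\rangle$: basis $x_0,\dots,x_{n-1}$, $\Delta(x_i)=\sum_{j+k=i}x_j\otimes x_k$, $\epsilon(x_i)=\delta_{i0}$; $C\otimes C$ has the tensor product coalgebra structure; Sweedler notation $\Delta(b)=b_{(1)}\otimes b_{(2)}$. For linear maps $\mathfrak p,\mathfrak d\colon C\otimes C\to C$ write $a\cdot b=\mathfrak p(a\otimes b)$, $a:b=\mathfrak d(a\otimes b)$, $\mathfrak p(x_i\otimes x_j)=\sum_{k=0}^{n-1}\mathfrak p_{ij}^kx_k$, $\mathfrak d(x_i\otimes x_j)=\sum_{k=0}^{n-1}\mathfrak d_{ij}^kx_k$. A triple $(C,\mathfrak p,\mathfrak d)$ with $\mathfrak p,\mathfrak d$ coalgebra morphisms is a regular $q$-magma coalgebra if there are coalgebra morphisms $a\otimes b\mapsto a^b$, $a\otimes b\mapsto a_b$ from $C\otimes C$ to $C$ with $a^{b_{(1)}}\cdot b_{(2)}=(a\cdot b_{(1)})^{b_{(2)}}=\epsilon(b)a$ and $(a:b_{(2)})_{b_{(1)}}=a_{b_{(2)}}:b_{(1)}=\epsilon(b)a$ for all $a,b\in C$. *)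

theory Defs
  imports "HOL-Computational_Algebra.Polynomial"
begin

(* The coalgebra C = (K[y]/<y^n>)^* has basis x_0,...,x_{n-1} with
   Delta(x_i) = sum_{j+k=i} x_j (x) x_k and eps(x_i) = delta_{i0}.
   A linear map f : C (x) C -> C is given by its structure constants
   F i j k, meaning f(x_i (x) x_j) = sum_{k<n} F i j k x_k
   (only indices < n are relevant). *)

definition alg_closed_field :: "'k::field itself \<Rightarrow> bool" where
  "alg_closed_field _ \<longleftrightarrow> (\<forall>p :: 'k poly. degree p > 0 \<longrightarrow> (\<exists>x. poly p x = 0))"

(* f is a coalgebra morphism C (x) C -> C (C (x) C with the tensor product
   coalgebra structure), written out on basis elements:
   eps(f(x_i (x) x_j)) = eps(x_i) eps(x_j), and
   Delta(f(x_i (x) x_j)) = sum_{i1+i2=i, j1+j2=j} f(x_i1 (x) x_j1) (x) f(x_i2 (x) x_j2),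
   compared coefficientwise at x_k (x) x_l. *)
definition coalg_morph :: "nat \<Rightarrow> (nat \<Rightarrow> nat \<Rightarrow> nat \<Rightarrow> 'k::field) \<Rightarrow> bool" where
  "coalg_morph n F \<longleftrightarrow>
     (\<forall>i<n. \<forall>j<n. F i j 0 = (if i = 0 \<and> j = 0 then 1 else 0)) \<and>
     (\<forall>i<n. \<forall>j<n. \<forall>k<n. \<forall>l<n.
        (if k + l < n then F i j (k + l) else 0)
          = (\<Sum>i1\<le>i. \<Sum>j1\<le>j. F i1 j1 k * F (i - i1) (j - j1) l))"

(* Regular q-magma coalgebra (C,p,d): p, d coalgebra morphisms and there exist
   coalgebra morphisms U (a (x) b |-> a^b) and V (a (x) b |-> a_b) with
   a^{b(1)} . b(2) = (a . b(1))^{b(2)} = eps(b) a  and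
   (a : b(2))_{b(1)} = a_{b(2)} : b(1) = eps(b) a,
   written out for a = x_i, b = x_j, coefficient at x_k (by linearity this
   is equivalent to the identities for all a, b in C). *)
definition regular_qmagma ::
  "nat \<Rightarrow> (nat \<Rightarrow> nat \<Rightarrow> nat \<Rightarrow> 'k::field) \<Rightarrow> (nat \<Rightarrow> nat \<Rightarrow> nat \<Rightarrow> 'k) \<Rightarrow> bool" where
  "regular_qmagma n P D \<longleftrightarrow> coalg_morph n P \<and> coalg_morph n D \<and>
     (\<exists>U V. coalg_morph n U \<and> coalg_morph n V \<and>
       (\<forall>i<n. \<forall>j<n. \<forall>k<n.
          (\<Sum>j1\<le>j. \<Sum>m<n. U i j1 m * P m (j - j1) k)
             = (if j = 0 \<and> i = k then 1 else 0) \<and>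
          (\<Sum>j1\<le>j. \<Sum>m<n. P i j1 m * U m (j - j1) k)
             = (if j = 0 \<and> i = k then 1 else 0) \<and>
          (\<Sum>j1\<le>j. \<Sum>m<n. D i (j - j1) m * V m j1 k)
             = (if j = 0 \<and> i = k then 1 else 0) \<and>
          (\<Sum>j1\<le>j. \<Sum>m<n. V i (j - j1) m * D m j1 k)
             = (if j = 0 \<and> i = k then 1 else 0)))"

end

theory Submission
  imports Defs
begin

text \<open>
  Dually, a coalgebra morphism \<open>F: C \<otimes> C \<rightarrow> C\<close> is an algebra map
  \<open>K[y]/(y\<^sup>n) \<rightarrow> K[s,t]/(s\<^sup>n,t\<^sup>n)\<close>, determined by the image \<open>f\<close> of \<open>y\<close>;
  \<open>F i j k\<close> is the coefficient of \<open>s\<^sup>i t\<^sup>j\<close> in \<open>f\<^sup>k\<close>, so that \<open>F i j (m+1)\<close> is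
  obtained from \<open>F _ _ 1\<close> and \<open>F _ _ m\<close> by the product rule.
  Since \<open>f\<^sup>n = 0\<close>, \<open>f\<close> has no constant term, and the inverse from the regularity
  condition forces the coefficient \<open>a\<close> of \<open>s\<close> in \<open>f\<close> to be nonzero.
  If \<open>f(0,t) \<noteq> 0\<close>, let \<open>c t\<^sup>r\<close> be its lowest term. For the weight \<open>r i + j\<close>
  the lowest part of \<open>f\<close> is \<open>a s + c t\<^sup>r\<close>, so the coefficient of \<open>s\<^sup>n\<^sup>-\<^sup>1 t\<^sup>r\<close>
  in \<open>f\<^sup>n = 0\<close> is \<open>n a\<^sup>n\<^sup>-\<^sup>1 c\<close>, which is nonzero in characteristic 0.
  Hence \<open>s\<close> divides \<open>f\<close>, so \<open>s\<^sup>k\<close> divides \<open>f\<^sup>k\<close>, i.e. \<open>F i j k = 0\<close> for \<open>i < k\<close>.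
\<close>

lemma coalg_morph_counit:
  assumes "coalg_morph n F" "i < n" "j < n"
  shows "F i j 0 = (if i = 0 \<and> j = 0 then 1 else 0)"
  using assms unfolding coalg_morph_def by blast

lemma coalg_morph_power_step:
  assumes "coalg_morph n F" "1 < n" "i < n" "j < n" "m < n"
  shows "(if Suc m < n then F i j (Suc m) else 0)
           = (\<Sum>i1\<le>i. \<Sum>j1\<le>j. F i1 j1 1 * F (i - i1) (j - j1) m)"
proof -
  have "(if 1 + m < n then F i j (1 + m) else 0)
          = (\<Sum>i1\<le>i. \<Sum>j1\<le>j. F i1 j1 1 * F (i - i1) (j - j1) m)"
    using assms unfolding coalg_morph_def by blast
  then show ?thesis by (simp only: Suc_eq_plus1_left)
qed

lemma coalg_morph_constant_term_power:
  assumes "coalg_morph n F" "1 < n" "m < n"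
  shows "F 0 0 m = F 0 0 1 ^ m"
  using assms(3)
proof (induction m)
  case 0
  then show ?case using coalg_morph_counit[OF assms(1)] by simp
next
  case (Suc m)
  then show ?case using coalg_morph_power_step[OF assms(1,2), of 0 0 m] by simp
qed

lemma coalg_morph_constant_term_zero:
  assumes "coalg_morph n F" "1 < n"
  shows "F 0 0 1 = (0::'k::field)"
proof -
  have "0 = F 0 0 1 * F 0 0 (n - 1)"
    using coalg_morph_power_step[OF assms, of 0 0 "n - 1"] assms(2) by simp
  also have "\<dots> = F 0 0 1 ^ n"
    using coalg_morph_constant_term_power[OF assms, of "n - 1"] assms(2)
    by (simp flip: power_Suc)
  finally show ?thesis by simp
qed

lemma weight_split:
  fixes a b i j i1 j1 :: nat
  assumes "i1 \<le> i" "j1 \<le> j"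
  shows "a * i + b * j = (a * i1 + b * j1) + (a * (i - i1) + b * (j - j1))"
proof -
  have "a * i = a * i1 + a * (i - i1)" "b * j = b * j1 + b * (j - j1)"
    using assms by (simp_all flip: add_mult_distrib2)
  then show ?thesis by simp
qed

lemma sum_sum_delta:
  "(\<Sum>i1\<le>(i::nat). \<Sum>j1\<le>(j::nat). if i1 = p \<and> j1 = q then (x::'a::comm_monoid_add) else 0)
    = (if p \<le> i \<and> q \<le> j then x else 0)"
proof -
  have "(\<Sum>j1\<le>j. if i1 = p \<and> j1 = q then x else 0) = (if i1 = p then if q \<le> j then x else 0 else 0)"
    for i1
    by (cases "i1 = p") simp_all
  then show ?thesis by simp
qed

lemma coalg_morph_weight_vanishing:
  fixes F :: "nat \<Rightarrow> nat \<Rightarrow> nat \<Rightarrow> 'k::field" and a b c :: nat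
  assumes F: "coalg_morph n F" "1 < n"
    and low: "\<And>i j. i < n \<Longrightarrow> j < n \<Longrightarrow> a * i + b * j < c \<Longrightarrow> F i j 1 = 0"
    and "i < n" "j < n" "m < n" "a * i + b * j < c * m"
  shows "F i j m = 0"
  using assms(4-7)
proof (induction m arbitrary: i j)
  case 0
  then show ?case by simp
next
  case (Suc m)
  have "F i j (Suc m) = (\<Sum>i1\<le>i. \<Sum>j1\<le>j. F i1 j1 1 * F (i - i1) (j - j1) m)"
    using coalg_morph_power_step[OF F, of i j m] Suc.prems by simp
  also have "\<dots> = 0"
  proof (intro sum.neutral ballI)
    fix i1 j1 assume "i1 \<in> {..i}" "j1 \<in> {..j}"
    then have le: "i1 \<le> i" "j1 \<le> j" by auto
    show "F i1 j1 1 * F (i - i1) (j - j1) m = 0"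
    proof (cases "a * i1 + b * j1 < c")
      case True
      then show ?thesis using low[of i1 j1] le Suc.prems by simp
    next
      case False
      have "a * (i - i1) + b * (j - j1) < c * m"
        using weight_split[OF le, of a b] False Suc.prems(4) by simp
      then show ?thesis using Suc.IH[of "i - i1" "j - j1"] Suc.prems by simp
    qed
  qed
  finally show ?case .
qed

lemma coalg_morph_degree_vanishing:
  assumes "coalg_morph n F" "1 < n" "i < n" "j < n" "m < n" "i + j < m"
  shows "F i j m = (0::'k::field)"
proof (rule coalg_morph_weight_vanishing[OF assms(1,2), of 1 1 1])
  fix i' j' :: nat assume "1 * i' + 1 * j' < 1"
  then show "F i' j' 1 = 0" using coalg_morph_constant_term_zero[OF assms(1,2)] by simp
qed (use assms(3-6) in simp_all)

lemma coalg_morph_linear_coeff_nonzero: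
  assumes "coalg_morph n F" "1 < n" "(\<Sum>m<n. F 1 0 m * G m 0 1) = (1::'k::field)"
  shows "F 1 0 1 \<noteq> 0"
proof -
  have summand: "F 1 0 m * G m 0 1 = (if m = 1 then F 1 0 1 * G 1 0 1 else 0)"
    if "m < n" for m
  proof -
    consider "m = 0" | "m = 1" | "1 < m" by linarith
    then show ?thesis
    proof cases
      case 1
      then show ?thesis using coalg_morph_counit[OF assms(1), of 1 0] assms(2) by simp
    next
      case 2
      then show ?thesis by simp
    next
      case 3
      then show ?thesis using coalg_morph_degree_vanishing[OF assms(1,2), of 1 0 m] that by simp
    qed
  qed
  have "1 = (\<Sum>m<n. F 1 0 m * G m 0 1)"
    using assms(3) by simp
  also have "\<dots> = (\<Sum>m<n. if m = 1 then F 1 0 1 * G 1 0 1 else 0)"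
    using summand by (intro sum.cong) auto
  also have "\<dots> = F 1 0 1 * G 1 0 1"
    using assms(2) by simp
  finally show ?thesis by auto
qed

lemma coalg_morph_t_order_vanishing:
  fixes F :: "nat \<Rightarrow> nat \<Rightarrow> nat \<Rightarrow> 'k::field"
  assumes F: "coalg_morph n F" "1 < n" and order: "\<forall>j<r. F 0 j 1 = 0"
    and "i < n" "j < n" "m < n" "r * i + j < r * m"
  shows "F i j m = 0"
proof (rule coalg_morph_weight_vanishing[OF F, of r 1 r])
  fix i' j' :: nat assume low: "r * i' + 1 * j' < r"
  then have "i' = 0" by (cases i') auto
  with low show "F i' j' 1 = 0" using order by simp
qed (use assms(4-7) in simp_all)

lemma weight_eq_unit_cases:
  fixes r i j :: nat
  assumes "1 \<le> r" "r * i + j = r"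
  shows "(i = 0 \<and> j = r) \<or> (i = 1 \<and> j = 0)"
  using assms by (cases i) (auto simp: mult_eq_self_implies_10)

lemma coalg_morph_power_step_leading:
  fixes F :: "nat \<Rightarrow> nat \<Rightarrow> nat \<Rightarrow> 'k::field"
  assumes F: "coalg_morph n F" "1 < n" and order: "\<forall>j<r. F 0 j 1 = 0" and r: "1 \<le> r"
    and ij: "i < n" "j < n" "m < n" and weight: "r * i + j = r * Suc m"
  shows "(if Suc m < n then F i j (Suc m) else 0)
           = (if r \<le> j then F 0 r 1 * F i (j - r) m else 0)
             + (if 1 \<le> i then F 1 0 1 * F (i - 1) j m else 0)"
proof -
  have summand: "F i1 j1 1 * F (i - i1) (j - j1) m
      = (if i1 = 0 \<and> j1 = r then F 0 r 1 * F i (j - r) m else 0)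
        + (if i1 = 1 \<and> j1 = 0 then F 1 0 1 * F (i - 1) j m else 0)"
    if le: "i1 \<le> i" "j1 \<le> j" for i1 j1
  proof -
    consider "r * i1 + j1 < r" | "r * i1 + j1 = r" | "r < r * i1 + j1" by linarith
    then show ?thesis
    proof cases
      case 1
      then have "F i1 j1 1 = 0"
        using coalg_morph_t_order_vanishing[OF F order, of i1 j1 1] le ij F(2) by simp
      then show ?thesis using 1 by auto
    next
      case 2
      then show ?thesis using weight_eq_unit_cases[OF r] r by auto
    next
      case 3
      then have "r * (i - i1) + (j - j1) < r * m"
        using weight_split[OF le, of r 1] weight by simp
      then have "F (i - i1) (j - j1) m = 0"
        using coalg_morph_t_order_vanishing[OF F order, of "i - i1" "j - j1" m] le ij by simp
      then show ?thesis using 3 by auto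
    qed
  qed
  have "(if Suc m < n then F i j (Suc m) else 0)
          = (\<Sum>i1\<le>i. \<Sum>j1\<le>j. F i1 j1 1 * F (i - i1) (j - j1) m)"
    using coalg_morph_power_step[OF F ij] .
  also have "\<dots> = (\<Sum>i1\<le>i. \<Sum>j1\<le>j.
                (if i1 = 0 \<and> j1 = r then F 0 r 1 * F i (j - r) m else 0)
                + (if i1 = 1 \<and> j1 = 0 then F 1 0 1 * F (i - 1) j m else 0))"
    using summand by (intro sum.cong) auto
  also have "\<dots> = (if r \<le> j then F 0 r 1 * F i (j - r) m else 0)
                    + (if 1 \<le> i then F 1 0 1 * F (i - 1) j m else 0)"
    by (simp only: sum.distrib sum_sum_delta) simp
  finally show ?thesis .
qed

lemma coalg_morph_s_power_coeff:
  fixes F :: "nat \<Rightarrow> nat \<Rightarrow> nat \<Rightarrow> 'k::field"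
  assumes F: "coalg_morph n F" "1 < n" and order: "\<forall>j<r. F 0 j 1 = 0" and r: "1 \<le> r"
    and "m < n"
  shows "F m 0 m = F 1 0 1 ^ m"
  using assms(5)
proof (induction m)
  case 0
  then show ?case using coalg_morph_counit[OF F(1)] by simp
next
  case (Suc m)
  then show ?case
    using coalg_morph_power_step_leading[OF F order r, of "Suc m" 0 m] r by simp
qed

lemma coalg_morph_s_power_t_coeff:
  fixes F :: "nat \<Rightarrow> nat \<Rightarrow> nat \<Rightarrow> 'k::field"
  assumes F: "coalg_morph n F" "1 < n" and order: "\<forall>j<r. F 0 j 1 = 0" and r: "1 \<le> r" "r < n"
    and "Suc m < n"
  shows "F m r (Suc m) = of_nat (Suc m) * F 1 0 1 ^ m * F 0 r 1"
  using assms(6)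
proof (induction m)
  case 0
  then show ?case by simp
next
  case (Suc m)
  then have "F (Suc m) r (Suc (Suc m))
      = F 0 r 1 * F (Suc m) 0 (Suc m) + F 1 0 1 * F m r (Suc m)"
    using coalg_morph_power_step_leading[OF F order r(1), of "Suc m" r "Suc m"] r by simp
  also have "\<dots> = F 0 r 1 * F 1 0 1 ^ Suc m + F 1 0 1 * (of_nat (Suc m) * F 1 0 1 ^ m * F 0 r 1)"
    using coalg_morph_s_power_coeff[OF F order r(1), of "Suc m"] Suc by simp
  also have "\<dots> = of_nat (Suc (Suc m)) * F 1 0 1 ^ Suc m * F 0 r 1"
    by (simp add: algebra_simps)
  finally show ?case .
qed

lemma coalg_morph_lowest_t_coeff_zero:
  fixes F :: "nat \<Rightarrow> nat \<Rightarrow> nat \<Rightarrow> 'k::field_char_0"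
  assumes F: "coalg_morph n F" "1 < n" and s_coeff: "F 1 0 1 \<noteq> 0"
    and order: "\<forall>j<r. F 0 j 1 = 0" and r: "1 \<le> r" "r < n"
  shows "F 0 r 1 = 0"
proof -
  define m where "m = n - 2"
  have n: "n = Suc (Suc m)"
    using F(2) unfolding m_def by simp
  have "0 = F 0 r 1 * F (Suc m) 0 (Suc m) + F 1 0 1 * F m r (Suc m)"
    using coalg_morph_power_step_leading[OF F order r(1), of "Suc m" r "Suc m"] r n by simp
  also have "\<dots> = F 0 r 1 * F 1 0 1 ^ Suc m + F 1 0 1 * (of_nat (Suc m) * F 1 0 1 ^ m * F 0 r 1)"
    using coalg_morph_s_power_coeff[OF F order r(1), of "Suc m"]
      coalg_morph_s_power_t_coeff[OF F order r, of m] n by simp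
  also have "\<dots> = of_nat n * F 1 0 1 ^ Suc m * F 0 r 1"
    unfolding n by (simp add: algebra_simps)
  finally show ?thesis
    using s_coeff F(2) by simp
qed

lemma coalg_morph_pure_t_coeffs_zero:
  fixes F :: "nat \<Rightarrow> nat \<Rightarrow> nat \<Rightarrow> 'k::field_char_0"
  assumes F: "coalg_morph n F" "1 < n" and s_coeff: "F 1 0 1 \<noteq> 0" and "j < n"
  shows "F 0 j 1 = 0"
  using assms(4)
proof (induction j rule: less_induct)
  case (less j)
  show ?case
  proof (cases "j = 0")
    case True
    then show ?thesis using coalg_morph_constant_term_zero[OF F] by simp
  next
    case False
    then show ?thesis
      using coalg_morph_lowest_t_coeff_zero[OF F s_coeff, of j] less by simp
  qed
qed

lemma coalg_morph_vanishing_below_diagonal: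
  fixes F :: "nat \<Rightarrow> nat \<Rightarrow> nat \<Rightarrow> 'k::field_char_0"
  assumes F: "coalg_morph n F" "1 < n" and s_coeff: "F 1 0 1 \<noteq> 0"
    and "i < n" "j < n" "k < n" "i < k"
  shows "F i j k = 0"
proof (rule coalg_morph_weight_vanishing[OF F, of 1 0 1])
  fix i' j' :: nat assume "j' < n" "1 * i' + 0 * j' < 1"
  then show "F i' j' 1 = 0"
    using coalg_morph_pure_t_coeffs_zero[OF F s_coeff] by simp
qed (use assms(4-7) in simp_all)

lemma regular_qmagma_s_coeffs_nonzero:
  assumes "regular_qmagma n P D" "1 < n"
  shows "P 1 0 1 \<noteq> 0" "D 1 0 1 \<noteq> 0"
proof -
  obtain U V where P: "coalg_morph n P" and D: "coalg_morph n D"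
    and inverses: "\<forall>i<n. \<forall>j<n. \<forall>k<n.
          (\<Sum>j1\<le>j. \<Sum>m<n. P i j1 m * U m (j - j1) k) = (if j = 0 \<and> i = k then 1 else 0) \<and>
          (\<Sum>j1\<le>j. \<Sum>m<n. D i (j - j1) m * V m j1 k) = (if j = 0 \<and> i = k then 1 else 0)"
    using assms(1) unfolding regular_qmagma_def by blast
  have "(\<Sum>m<n. P 1 0 m * U m 0 1) = 1" "(\<Sum>m<n. D 1 0 m * V m 0 1) = 1"
    using inverses[rule_format, of 1 0 1] assms(2) by simp_all
  then show "P 1 0 1 \<noteq> 0" "D 1 0 1 \<noteq> 0"
    using coalg_morph_linear_coeff_nonzero[OF P assms(2)]
      coalg_morph_linear_coeff_nonzero[OF D assms(2)] by auto
qed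

theorem proposition1p14:
  fixes n :: nat and P D :: "nat \<Rightarrow> nat \<Rightarrow> nat \<Rightarrow> 'k::field_char_0"
  assumes "alg_closed_field TYPE('k)"
    and "n \<ge> 2"
    and "regular_qmagma n P D"
    and "i < n" and "j < n" and "k < n" and "k > i"
  shows "P i j k = 0 \<and> D i j k = 0"
proof -
  have n: "1 < n" using assms(2) by simp
  have P: "coalg_morph n P" and D: "coalg_morph n D"
    using assms(3) unfolding regular_qmagma_def by blast+
  note s_coeffs = regular_qmagma_s_coeffs_nonzero[OF assms(3) n]
  show ?thesis
    using coalg_morph_vanishing_below_diagonal[OF P n s_coeffs(1)]
      coalg_morph_vanishing_below_diagonal[OF D n s_coeffs(2)] assms(4-7)
    by blast
qed

end
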